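(* Let $P$ be a finite $(3+1)$-free poset, $\lambda$ a partition, and $(r,c)$, $(r+d+1,c+d)$ boxes of the Young diagram of $\lambda$ with $d\ge0$. Then for every $P$-tableau $T$ of shape $\lambda$, $T(r,c)<_PT(r+d+1,c+d)$.
   Context: $a<_Pb$: strict order. Young diagrams in English notation (row index increasing downward, column index increasing rightward). A $P$-tableau of shape $\lambda$ is a filling $T$ of the Young diagram by elements of $P$ with $T(1,c)<_PT(2,c)<_P\cdots$ down each column and $T(r,c+1)\not<_PT(r,c)$ along each row. *)

theory Defs
  imports Main
begin

definition strict_poset :: "'a set \<Rightarrow> ('a \<Rightarrow> 'a \<Rightarrow> bool) \<Rightarrow> bool" where
  "strict_poset P lt \<longleftrightarrow>
     (\<forall>x\<in>P. \<not> lt x x) \<and>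
     (\<forall>x\<in>P. \<forall>y\<in>P. \<forall>z\<in>P. lt x y \<longrightarrow> lt y z \<longrightarrow> lt x z)"

definition incomparable :: "('a \<Rightarrow> 'a \<Rightarrow> bool) \<Rightarrow> 'a \<Rightarrow> 'a \<Rightarrow> bool" where
  "incomparable lt x y \<longleftrightarrow> x \<noteq> y \<and> \<not> lt x y \<and> \<not> lt y x"

definition three_one_free :: "'a set \<Rightarrow> ('a \<Rightarrow> 'a \<Rightarrow> bool) \<Rightarrow> bool" where
  "three_one_free P lt \<longleftrightarrow>
     \<not> (\<exists>a\<in>P. \<exists>b\<in>P. \<exists>c\<in>P. \<exists>d\<in>P. lt a b \<and> lt b c \<and>
          incomparable lt d a \<and> incomparable lt d b \<and> incomparable lt d c)"

definition is_partition :: "nat list \<Rightarrow> bool" where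
  "is_partition la \<longleftrightarrow> sorted_wrt (\<ge>) la \<and> (\<forall>x\<in>set la. 0 < x)"

text \<open>Boxes of the Young diagram, English notation, 1-indexed: (row, column).\<close>
definition in_diagram :: "nat list \<Rightarrow> nat \<times> nat \<Rightarrow> bool" where
  "in_diagram la rc \<longleftrightarrow> (case rc of (r, c) \<Rightarrow>
     1 \<le> r \<and> r \<le> length la \<and> 1 \<le> c \<and> c \<le> la ! (r - 1))"

definition P_tableau :: "'a set \<Rightarrow> ('a \<Rightarrow> 'a \<Rightarrow> bool) \<Rightarrow> nat list \<Rightarrow> (nat \<Rightarrow> nat \<Rightarrow> 'a) \<Rightarrow> bool" where
  "P_tableau P lt la T \<longleftrightarrow>
     (\<forall>r c. in_diagram la (r, c) \<longrightarrow> T r c \<in> P) \<and>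
     (\<forall>r c. in_diagram la (r, c) \<and> in_diagram la (r + 1, c) \<longrightarrow> lt (T r c) (T (r + 1) c)) \<and>
     (\<forall>r c. in_diagram la (r, c) \<and> in_diagram la (r, c + 1) \<longrightarrow> \<not> lt (T r (c + 1)) (T r c))"

end

theory Submission
  imports Defs
begin

text \<open>Given \<open>x = T(r,c) < u = T(r+d,c+d-1)\<close>, the box below \<open>u\<close> holds
  \<open>v\<close> with \<open>u < v\<close>, and the box to the right of \<open>v\<close> holds \<open>z\<close> with \<open>z \<not>< v\<close>. If \<open>x \<not>< z\<close>,
  then \<open>z\<close> would be incomparable to each element of the chain \<open>x < u < v\<close>, contradicting
  (3+1)-freeness.\<close>

lemma in_diagram_mono:
  assumes "is_partition la" "in_diagram la (i, j)"
    and "1 \<le> i'" "i' \<le> i" "1 \<le> j'" "j' \<le> j"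
  shows "in_diagram la (i', j')"
proof -
  have sorted: "sorted_wrt (\<ge>) la" using assms(1) by (simp add: is_partition_def)
  have box: "i \<le> length la" "j \<le> la ! (i - 1)" using assms(2) by (auto simp: in_diagram_def)
  have "la ! (i - 1) \<le> la ! (i' - 1)"
  proof (cases "i' = i")
    case False
    then have "i' - 1 < i - 1" using assms by linarith
    then show ?thesis using sorted box by (simp add: sorted_wrt_iff_nth_less)
  qed simp
  then show ?thesis using assms box by (auto simp: in_diagram_def)
qed

lemma three_one_free_lt_of_chain:
  assumes "strict_poset P lt" "three_one_free P lt"
    and "x \<in> P" "u \<in> P" "v \<in> P" "z \<in> P"
    and "lt x u" "lt u v" "\<not> lt z v"
  shows "lt x z"
proof (rule ccontr)
  assume "\<not> lt x z"
  have trans: "\<And>a b e. a \<in> P \<Longrightarrow> b \<in> P \<Longrightarrow> e \<in> P \<Longrightarrow> lt a b \<Longrightarrow> lt b e \<Longrightarrow> lt a e"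
    using assms(1) unfolding strict_poset_def by blast
  have "lt x v" using trans assms by blast
  then have "incomparable lt z x" "incomparable lt z u" "incomparable lt z v"
    unfolding incomparable_def using \<open>\<not> lt x z\<close> trans assms by blast+
  then show False
    using assms unfolding three_one_free_def by blast
qed

lemma P_tableau_mem:
  "P_tableau P lt la T \<Longrightarrow> in_diagram la (i, j) \<Longrightarrow> T i j \<in> P"
  unfolding P_tableau_def by blast

lemma P_tableau_column_lt:
  "P_tableau P lt la T \<Longrightarrow> in_diagram la (i, j) \<Longrightarrow> in_diagram la (i + 1, j)
    \<Longrightarrow> lt (T i j) (T (i + 1) j)"
  unfolding P_tableau_def by blast

lemma P_tableau_row_not_lt:
  "P_tableau P lt la T \<Longrightarrow> in_diagram la (i, j) \<Longrightarrow> in_diagram la (i, j + 1)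
    \<Longrightarrow> \<not> lt (T i (j + 1)) (T i j)"
  unfolding P_tableau_def by blast

lemma P_tableau_lt_diagonal:
  assumes "strict_poset P lt" "three_one_free P lt" "is_partition la" "P_tableau P lt la T"
  shows "in_diagram la (r, c) \<Longrightarrow> in_diagram la (r + d + 1, c + d)
    \<Longrightarrow> lt (T r c) (T (r + d + 1) (c + d))"
proof (induction d arbitrary: r c)
  case 0
  then show ?case using P_tableau_column_lt[OF assms(4)] by simp
next
  case (Suc d)
  have "1 \<le> r" "1 \<le> c" using Suc.prems(1) by (auto simp: in_diagram_def)
  then have u_box: "in_diagram la (r + d + 1, c + d)"
    and v_box: "in_diagram la (r + d + 2, c + d)"
    using in_diagram_mono[OF assms(3) Suc.prems(2)] by auto
  have "lt (T r c) (T (r + d + 1) (c + d))"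
    using Suc.IH[OF Suc.prems(1) u_box] .
  moreover have "lt (T (r + d + 1) (c + d)) (T (r + d + 2) (c + d))"
    using P_tableau_column_lt[OF assms(4) u_box] v_box by simp
  moreover have "\<not> lt (T (r + d + 2) (c + d + 1)) (T (r + d + 2) (c + d))"
    using P_tableau_row_not_lt[OF assms(4) v_box] Suc.prems(2) by simp
  ultimately have "lt (T r c) (T (r + d + 2) (c + d + 1))"
    using three_one_free_lt_of_chain[OF assms(1,2) P_tableau_mem[OF assms(4) Suc.prems(1)]
        P_tableau_mem[OF assms(4) u_box] P_tableau_mem[OF assms(4) v_box]
        P_tableau_mem[OF assms(4) Suc.prems(2)]]
    by simp
  then show ?case by simp
qed

theorem mainTheorem20:
  fixes P :: "'a set" and lt :: "'a \<Rightarrow> 'a \<Rightarrow> bool"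
    and la :: "nat list" and T :: "nat \<Rightarrow> nat \<Rightarrow> 'a" and r c d :: nat
  assumes "finite P" and "strict_poset P lt" and "three_one_free P lt"
    and "is_partition la"
    and "in_diagram la (r, c)" and "in_diagram la (r + d + 1, c + d)"
    and "P_tableau P lt la T"
  shows "lt (T r c) (T (r + d + 1) (c + d))"
  using P_tableau_lt_diagonal[OF assms(2,3,4,7) assms(5,6)] .

end
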